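(* Let $N=[1,n]=\{1,\dots,n\}$ ($n\ge0$). Then \[ |G_2(N)/{\cong}|=\sum_{[M]\in\mathcal{P}(N)/{\cong}}|\overline{L}_2(|M|)/\mathcal{S}_2| + \sum_{[M]\in\mathcal{P}(N)/{\cong},\ M\notin\mathrm{Sym}}\big(|\overline{t}^{\langle 1\rangle}_{|M|}|+|\overline{t}^{\langle c\rangle}_{|M|}|\big). \]
   Context: Binary CAs: for finite $M=\{j_1<\dots<j_m\}\subset\mathbb{Z}$ and $f:\{0,1\}^m\to\{0,1\}$, $\Phi^M_f(x)_i=f(x_{i+j_1}\dots x_{i+j_m})$ on $\{0,1\}^{\mathbb{Z}}$; $G_2(N)=\{\Phi^N_f\mid f:\{0,1\}^{|N|}\to\{0,1\}\}$. $\overline{L}_2(m)$ is the set of irreducible $f:\{0,1\}^m\to\{0,1\}$ (depending on every argument). On rules: $c$ swaps $0,1$ letterwise, $r$ reverses words, $\hat cf(w)=c f(cw)$, $\hat rf(w)=f(rw)$; $\mathcal{S}_2=\{1,r,c,rc\}$ acts on $\overline{L}_2(m)$, $\mathrm{stab}(f)=\{\alpha\mid\hat\alpha f=f\}$, and $\overline{t}^U_m=\{[f]\in\overline{L}_2(m)/\mathcal{S}_2\mid\mathrm{stab}(f)=U\}$ for $U\le\mathcal{S}_2$. On global maps: $\sigma\Phi=\sigma\circ\Phi$ with $(\sigma x)_i=x_{i+1}$, $\hat c\Phi(x)=c\Phi(cx)$ (cellwise), $\hat r\Phi(x)=r\Phi(rx)$ with $(rx)_i=x_{-i}$; $\mathcal{T}_2$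 is the group generated by these, and $\Phi\cong\Psi$ iff $\Psi=\tau\Phi$ for some $\tau\in\mathcal{T}_2$; $G_2(N)/{\cong}$ is the set of classes of this relation restricted to $G_2(N)$. For sets of integers, $M\cong M'$ iff $M'=j+M$ or $M'=j-M$ for some $j\in\mathbb{Z}$ (where $j\pm M=\{j\pm i\mid i\in M\}$); $\mathcal{P}(N)/{\cong}$ is the set of classes of this relation restricted to subsets of $N$. $\mathrm{Sym}$ is the set of reflection-symmetrical sets, i.e. $M$ with $M=j-M$ for some $j\in\mathbb{Z}$. *)

theory Defs
  imports Main
begin

type_synonym config = "int \<Rightarrow> bool"
type_synonym gmap = "config \<Rightarrow> config"
type_synonym rule = "bool list \<Rightarrow> bool"

definition rules :: "nat \<Rightarrow> rule set" where
  "rules m = {f. \<forall>w. length w \<noteq> m \<longrightarrow> f w = False}"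

definition irr :: "nat \<Rightarrow> rule set" where
  "irr m = {f \<in> rules m. \<forall>k<m. \<exists>w. length w = m \<and> f (w[k := \<not> w ! k]) \<noteq> f w}"

datatype S2 = S1 | Sr | Sc | Src

definition act :: "nat \<Rightarrow> S2 \<Rightarrow> rule \<Rightarrow> rule" where
  "act m \<alpha> f = (case \<alpha> of
      S1 \<Rightarrow> f
    | Sr \<Rightarrow> (\<lambda>w. if length w = m then f (rev w) else False)
    | Sc \<Rightarrow> (\<lambda>w. if length w = m then \<not> f (map Not w) else False)
    | Src \<Rightarrow> (\<lambda>w. if length w = m then \<not> f (map Not (rev w)) else False))"

definition s2rel :: "nat \<Rightarrow> (rule \<times> rule) set" where
  "s2rel m = {(f, g). f \<in> irr m \<and> g \<in> irr m \<and> (\<exists>\<alpha>. g = act m \<alpha> f)}"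

definition stab :: "nat \<Rightarrow> rule \<Rightarrow> S2 set" where
  "stab m f = {\<alpha>. act m \<alpha> f = f}"

definition tbar :: "nat \<Rightarrow> S2 set \<Rightarrow> rule set set" where
  "tbar m U = {C \<in> irr m // s2rel m. \<exists>f\<in>C. stab m f = U}"

definition shiftc :: "config \<Rightarrow> config" where "shiftc x = (\<lambda>i. x (i + 1))"
definition unshiftc :: "config \<Rightarrow> config" where "unshiftc x = (\<lambda>i. x (i - 1))"
definition flipc :: "config \<Rightarrow> config" where "flipc x = (\<lambda>i. \<not> x i)"
definition revc :: "config \<Rightarrow> config" where "revc x = (\<lambda>i. x (- i))"

definition Phi :: "int set \<Rightarrow> rule \<Rightarrow> gmap" where
  "Phi M f = (\<lambda>x i. f (map (\<lambda>j. x (i + j)) (sorted_list_of_set M)))"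

definition G2 :: "int set \<Rightarrow> gmap set" where
  "G2 N = {Phi N f | f. f \<in> rules (card N)}"

text \<open>The group T_2 generated by sigma-hat, c-hat, r-hat (sigma-hat inverse included).\<close>
inductive_set T2 :: "(gmap \<Rightarrow> gmap) set" where
  T2_id: "id \<in> T2"
| T2_shift: "\<tau> \<in> T2 \<Longrightarrow> (\<lambda>\<Phi>. shiftc \<circ> \<tau> \<Phi>) \<in> T2"
| T2_unshift: "\<tau> \<in> T2 \<Longrightarrow> (\<lambda>\<Phi>. unshiftc \<circ> \<tau> \<Phi>) \<in> T2"
| T2_flip: "\<tau> \<in> T2 \<Longrightarrow> (\<lambda>\<Phi>. flipc \<circ> \<tau> \<Phi> \<circ> flipc) \<in> T2"
| T2_rev: "\<tau> \<in> T2 \<Longrightarrow> (\<lambda>\<Phi>. revc \<circ> \<tau> \<Phi> \<circ> revc) \<in> T2"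

definition congG :: "int set \<Rightarrow> (gmap \<times> gmap) set" where
  "congG N = {(\<Phi>, \<Psi>). \<Phi> \<in> G2 N \<and> \<Psi> \<in> G2 N \<and> (\<exists>\<tau>\<in>T2. \<Psi> = \<tau> \<Phi>)}"

definition congS :: "int set \<Rightarrow> (int set \<times> int set) set" where
  "congS N = {(M, M'). M \<subseteq> N \<and> M' \<subseteq> N \<and>
      (\<exists>j. M' = (\<lambda>i. j + i) ` M \<or> M' = (\<lambda>i. j - i) ` M)}"

definition Sym :: "int set set" where
  "Sym = {M. \<exists>j. M = (\<lambda>i. j - i) ` M}"

definition rep :: "'a set \<Rightarrow> 'a" where
  "rep C = (SOME M. M \<in> C)"

end

theory Submission
  imports Defs
begin

text \<open>
  A map in \<open>G2 N\<close> depends on a well-defined set of coordinates \<open>M \<subseteq> N\<close>, so it is \<open>Phi M f\<close> for a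
  unique pair of such an \<open>M\<close> and an irreducible rule \<open>f\<close> of arity \<open>|M|\<close>. The generators of
  \<open>T2\<close> act on these pairs through the isometries \<open>i \<mapsto> j \<plusminus> i\<close> of \<open>\<int>\<close> on \<open>M\<close> together with
  the corresponding element of \<open>S2\<close> on \<open>f\<close> (shifts: \<open>1\<close>, reflection: \<open>r\<close>, flip: \<open>c\<close>). Grouping the
  orbits of pairs by the class of \<open>M\<close>, the pairs over a fixed representative \<open>M\<close> are identified by
  the elements of \<open>S2\<close> realised by isometries fixing \<open>M\<close>: all of \<open>S2\<close> if \<open>M\<close> is symmetric, only
  \<open>{1, c}\<close> otherwise. An \<open>S2\<close>-orbit with stabiliser \<open>U\<close> splits into \<open>1 + [U = 1] + [U = \<langle>c\<rangle>]\<close>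
  orbits of \<open>{1, c}\<close>, which yields the two sums.
\<close>

definition reverses :: "S2 \<Rightarrow> bool" where
  "reverses a \<longleftrightarrow> a = Sr \<or> a = Src"

definition complements :: "S2 \<Rightarrow> bool" where
  "complements a \<longleftrightarrow> a = Sc \<or> a = Src"

text \<open>\<open>S2\<close> is the Klein four-group: an element is determined by whether it reverses and whether
  it complements, and both add modulo 2.\<close>
definition s2_mult :: "S2 \<Rightarrow> S2 \<Rightarrow> S2" where
  "s2_mult a b = (case (reverses a \<noteq> reverses b, complements a \<noteq> complements b) of
      (False, False) \<Rightarrow> S1 | (True, False) \<Rightarrow> Sr | (False, True) \<Rightarrow> Sc | (True, True) \<Rightarrow> Src)"

lemma reverses_simps [simp]: "\<not> reverses S1" "reverses Sr" "\<not> reverses Sc" "reverses Src"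
  by (simp_all add: reverses_def)

lemma reverses_s2_mult: "reverses (s2_mult a b) \<longleftrightarrow> reverses a \<noteq> reverses b"
  by (cases a; cases b) (simp_all add: s2_mult_def complements_def)

lemma s2_mult_self [simp]: "s2_mult a a = S1"
  by (cases a) (simp_all add: s2_mult_def complements_def)

lemma map_Not_Not [simp]: "map (Not \<circ> Not) w = w"
  by (simp add: comp_def)

lemma act_S1 [simp]: "act m S1 f = f"
  by (simp add: act_def)

lemma act_in_rules: "f \<in> rules m \<Longrightarrow> act m a f \<in> rules m"
  by (cases a) (auto simp: act_def rules_def)

lemma act_act: "f \<in> rules m \<Longrightarrow> act m a (act m b f) = act m (s2_mult a b) f"
  by (cases a; cases b)
    (auto simp: act_def rules_def fun_eq_iff s2_mult_def complements_def rev_map)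

lemma act_act_self: "f \<in> rules m \<Longrightarrow> act m a (act m a f) = f"
  by (simp add: act_act)

lemma act_commute: "f \<in> rules m \<Longrightarrow> act m a (act m b f) = act m b (act m a f)"
  by (cases a; cases b) (auto simp: act_def rules_def fun_eq_iff rev_map)

lemma act_Src: "act m Src f = act m Sc (act m Sr f)"
  by (auto simp: act_def fun_eq_iff rev_map)

lemma irr_in_rules: "f \<in> irr m \<Longrightarrow> f \<in> rules m"
  by (simp add: irr_def)

lemma act_Sc_in_irr:
  assumes f: "f \<in> irr m"
  shows "act m Sc f \<in> irr m"
  unfolding irr_def
proof (intro CollectI conjI allI impI act_in_rules irr_in_rules[OF f])
  fix k assume k: "k < m"
  then obtain w where w: "length w = m" "f (w[k := \<not> w ! k]) \<noteq> f w"
    using f by (auto simp: irr_def)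
  have "map Not ((map Not w)[k := \<not> map Not w ! k]) = w[k := \<not> w ! k]"
    using k w by (simp add: map_update)
  then show "\<exists>w. length w = m \<and> act m Sc f (w[k := \<not> w ! k]) \<noteq> act m Sc f w"
    using w by (intro exI[of _ "map Not w"]) (simp add: act_def)
qed

lemma act_Sr_in_irr:
  assumes f: "f \<in> irr m"
  shows "act m Sr f \<in> irr m"
  unfolding irr_def
proof (intro CollectI conjI allI impI act_in_rules irr_in_rules[OF f])
  fix k assume k: "k < m"
  then have "m - k - 1 < m" by simp
  then obtain w where w: "length w = m" "f (w[m - k - 1 := \<not> w ! (m - k - 1)]) \<noteq> f w"
    using f by (auto simp: irr_def)
  have "rev ((rev w)[k := \<not> rev w ! k]) = w[m - k - 1 := \<not> w ! (m - k - 1)]"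
    using k w by (simp add: rev_update rev_nth)
  then show "\<exists>w. length w = m \<and> act m Sr f (w[k := \<not> w ! k]) \<noteq> act m Sr f w"
    using w by (intro exI[of _ "rev w"]) (simp add: act_def)
qed

lemma act_in_irr: "f \<in> irr m \<Longrightarrow> act m a f \<in> irr m"
  by (cases a) (auto simp: act_Src act_Sc_in_irr act_Sr_in_irr)

lemma finite_rules: "finite (rules m)"
proof -
  have "rules m \<subseteq> (\<lambda>S w. w \<in> S) ` Pow {w :: bool list. length w = m}"
  proof
    fix f assume "f \<in> rules m"
    then have "f = (\<lambda>w. w \<in> {w. length w = m \<and> f w})"
      by (auto simp: rules_def fun_eq_iff)
    then show "f \<in> (\<lambda>S w. w \<in> S) ` Pow {w :: bool list. length w = m}"
      by blast
  qed
  moreover have "finite {w :: bool list. length w = m}"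
    using finite_lists_length_eq[of "UNIV :: bool set" m] by simp
  ultimately show ?thesis
    by (meson finite_Pow_iff finite_imageI finite_subset)
qed

lemma finite_irr: "finite (irr m)"
  by (rule finite_subset[OF _ finite_rules]) (auto simp: irr_def)

subsection \<open>Counting classes of equivalence relations\<close>

lemma card_quotient_bij_betw:
  assumes eq: "equiv A r" and bij: "bij_betw h A B" and s: "s \<subseteq> B \<times> B"
    and iff: "\<And>a a'. a \<in> A \<Longrightarrow> a' \<in> A \<Longrightarrow> (a, a') \<in> r \<longleftrightarrow> (h a, h a') \<in> s"
  shows "card (A // r) = card (B // s)"
proof -
  have rA: "r \<subseteq> A \<times> A" using eq by (auto simp: equiv_def refl_on_def)
  have hB: "B = h ` A" using bij by (auto simp: bij_betw_def)
  have image_class: "s `` {h a} = h ` (r `` {a})" if a: "a \<in> A" for a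
  proof
    show "s `` {h a} \<subseteq> h ` (r `` {a})"
    proof
      fix z assume z: "z \<in> s `` {h a}"
      then obtain a' where a': "a' \<in> A" "z = h a'" using s hB by auto
      then have "(a, a') \<in> r" using iff a z by auto
      then show "z \<in> h ` (r `` {a})" using a' by auto
    qed
    show "h ` (r `` {a}) \<subseteq> s `` {h a}" using iff a rA by auto
  qed
  have "B // s = image h ` (A // r)"
    unfolding quotient_def hB using image_class by auto
  moreover have "inj_on (image h) (A // r)"
    using bij by (intro inj_on_image) (simp add: Union_quotient[OF eq] bij_betw_def)
  ultimately show ?thesis by (simp add: card_image)
qed

lemma card_image_eq_same_kernel:
  assumes "\<And>a a'. a \<in> A \<Longrightarrow> a' \<in> A \<Longrightarrow> f a = f a' \<longleftrightarrow> g a = g a'"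
  shows "card (f ` A) = card (g ` A)"
proof -
  let ?k = "\<lambda>y. g (inv_into A f y)"
  have k_f: "g (inv_into A f (f a)) = g a" if "a \<in> A" for a
  proof -
    have "inv_into A f (f a) \<in> A" "f (inv_into A f (f a)) = f a"
      using that by (auto intro: inv_into_into f_inv_into_f)
    then show ?thesis using assms that by blast
  qed
  then have "g ` A = ?k ` (f ` A)" by (simp add: image_image)
  moreover have "inj_on ?k (f ` A)"
    using assms k_f by (auto simp: inj_on_def)
  ultimately show ?thesis by (simp add: card_image)
qed

lemma quotient_eq_image: "A // r = (\<lambda>a. r `` {a}) ` A"
  by (auto simp: quotient_def)

lemma card_quotient_transfer:
  assumes eqA: "equiv A r" and eqC: "equiv C s" and BC: "B \<subseteq> C" and hAB: "h ` A \<subseteq> B"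
    and surj: "\<And>b. b \<in> B \<Longrightarrow> \<exists>a\<in>A. (h a, b) \<in> s"
    and iff: "\<And>a a'. a \<in> A \<Longrightarrow> a' \<in> A \<Longrightarrow> (a, a') \<in> r \<longleftrightarrow> (h a, h a') \<in> s"
  shows "card (A // r) = card (B // s)"
proof -
  have quotient_B: "B // s = (\<lambda>a. s `` {h a}) ` A"
  proof
    show "B // s \<subseteq> (\<lambda>a. s `` {h a}) ` A"
    proof
      fix Y assume "Y \<in> B // s"
      then obtain b where b: "b \<in> B" "Y = s `` {b}" by (auto simp: quotient_def)
      with surj obtain a where "a \<in> A" "(h a, b) \<in> s" by blast
      then have "Y = s `` {h a}" using b equiv_class_eq[OF eqC] by simp
      with \<open>a \<in> A\<close> show "Y \<in> (\<lambda>a. s `` {h a}) ` A" by blast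
    qed
    show "(\<lambda>a. s `` {h a}) ` A \<subseteq> B // s"
      using hAB by (auto simp: quotient_def)
  qed
  have same_kernel: "r `` {a} = r `` {a'} \<longleftrightarrow> s `` {h a} = s `` {h a'}"
    if "a \<in> A" "a' \<in> A" for a a'
  proof -
    have "h a \<in> C" "h a' \<in> C" using that hAB BC by auto
    then show ?thesis
      using that iff eq_equiv_class_iff[OF eqA] eq_equiv_class_iff[OF eqC] by metis
  qed
  show ?thesis
    unfolding quotient_B quotient_eq_image[of A] by (rule card_image_eq_same_kernel[OF same_kernel])
qed

lemma quotient_fibres_disjoint:
  assumes eqY: "equiv Y r" and eqZ: "equiv Z s" and hr: "\<And>y y'. (y, y') \<in> r \<Longrightarrow> (h y, h y') \<in> s"
    and K: "K \<in> Z // s" and K': "K' \<in> Z // s" and "K \<noteq> K'"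
  shows "{y\<in>Y. h y \<in> K} // r \<inter> {y\<in>Y. h y \<in> K'} // r = {}"
proof (rule ccontr)
  assume "{y\<in>Y. h y \<in> K} // r \<inter> {y\<in>Y. h y \<in> K'} // r \<noteq> {}"
  then obtain y y' where y: "y \<in> Y" "h y \<in> K" and y': "y' \<in> Y" "h y' \<in> K'"
    and "r `` {y} = r `` {y'}" by (auto simp: quotient_def)
  then have "(h y, h y') \<in> s" using eq_equiv_class_iff[OF eqY] hr by blast
  then show False using K K' y y' \<open>K \<noteq> K'\<close> quotient_eqI[OF eqZ] by blast
qed

lemma card_quotient_sum_fibres:
  assumes eqY: "equiv Y r" and fY: "finite Y" and eqZ: "equiv Z s" and fZ: "finite Z"
    and hYZ: "h ` Y \<subseteq> Z" and hr: "\<And>y y'. (y, y') \<in> r \<Longrightarrow> (h y, h y') \<in> s"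
  shows "card (Y // r) = (\<Sum>K\<in>Z // s. card ({y\<in>Y. h y \<in> K} // r))"
proof -
  let ?A = "\<lambda>K. {y\<in>Y. h y \<in> K} // r"
  have "Y // r \<subseteq> \<Union> (?A ` (Z // s))"
  proof
    fix X assume "X \<in> Y // r"
    then obtain y where y: "y \<in> Y" "X = r `` {y}" by (auto simp: quotient_def)
    then have "h y \<in> Z" using hYZ by auto
    then have "s `` {h y} \<in> Z // s" "h y \<in> s `` {h y}"
      using eqZ by (auto simp: quotient_def equiv_def refl_on_def)
    then show "X \<in> \<Union> (?A ` (Z // s))" using y by (auto simp: quotient_def)
  qed
  then have "Y // r = \<Union> (?A ` (Z // s))" by (auto simp: quotient_def)
  moreover have "card (\<Union> (?A ` (Z // s))) = (\<Sum>K\<in>Z // s. card (?A K))"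
  proof (rule card_UN_disjoint)
    show "finite (Z // s)" using fZ eqZ by (simp add: finite_quotient equiv_def)
    have "finite (Y // r)" using fY eqY by (simp add: finite_quotient equiv_def)
    then show "\<forall>K\<in>Z // s. finite (?A K)"
      by (auto simp: quotient_def intro: finite_subset)
    show "\<forall>K\<in>Z // s. \<forall>K'\<in>Z // s. K \<noteq> K' \<longrightarrow> ?A K \<inter> ?A K' = {}"
      using quotient_fibres_disjoint[where h = h, OF eqY eqZ hr] by blast
  qed
  ultimately show ?thesis by simp
qed

subsection \<open>Orbits of \<open>S2\<close> and of its subgroup \<open>{1, c}\<close>\<close>

definition compl_rel :: "nat \<Rightarrow> (rule \<times> rule) set" where
  "compl_rel m = {(f, g). f \<in> irr m \<and> g \<in> irr m \<and> (g = f \<or> g = act m Sc f)}"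

lemma equiv_s2rel: "equiv (irr m) (s2rel m)"
proof (rule equivI)
  show "s2rel m \<subseteq> irr m \<times> irr m" by (auto simp: s2rel_def)
  show "refl_on (irr m) (s2rel m)"
    unfolding refl_on_def s2rel_def by (auto intro!: exI[of _ S1])
  show "sym (s2rel m)"
    by (auto simp: sym_def s2rel_def intro!: act_act_self[symmetric] dest!: irr_in_rules)
  show "trans (s2rel m)"
    unfolding trans_def s2rel_def by (auto dest!: irr_in_rules simp: act_act)
qed

lemma equiv_compl_rel: "equiv (irr m) (compl_rel m)"
proof (rule equivI)
  show "compl_rel m \<subseteq> irr m \<times> irr m" by (auto simp: compl_rel_def)
  show "refl_on (irr m) (compl_rel m)" unfolding refl_on_def compl_rel_def by auto
  show "sym (compl_rel m)"
    by (auto simp: sym_def compl_rel_def dest!: irr_in_rules intro: act_act_self[symmetric])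
  show "trans (compl_rel m)"
    unfolding trans_def compl_rel_def by (auto dest!: irr_in_rules simp: act_act_self)
qed

lemma compl_rel_imp_s2rel: "(f, g) \<in> compl_rel m \<Longrightarrow> (f, g) \<in> s2rel m"
  by (auto simp: compl_rel_def s2rel_def intro: exI[of _ S1] exI[of _ Sc])

lemma s2rel_Image:
  assumes f: "f \<in> irr m"
  shows "s2rel m `` {f} = {f, act m Sr f, act m Sc f, act m Src f}"
proof
  show "s2rel m `` {f} \<subseteq> {f, act m Sr f, act m Sc f, act m Src f}"
  proof
    fix g assume "g \<in> s2rel m `` {f}"
    then obtain a where "g = act m a f" by (auto simp: s2rel_def)
    then show "g \<in> {f, act m Sr f, act m Sc f, act m Src f}" by (cases a) auto
  qed
  have "act m a f \<in> s2rel m `` {f}" for a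
    using f act_in_irr by (auto simp: s2rel_def)
  from this[of S1] this[of Sr] this[of Sc] this[of Src]
  show "{f, act m Sr f, act m Sc f, act m Src f} \<subseteq> s2rel m `` {f}" by simp
qed

lemma compl_rel_Image: "f \<in> irr m \<Longrightarrow> compl_rel m `` {f} = {f, act m Sc f}"
  by (auto simp: compl_rel_def act_in_irr)

lemma stab_act: 
  assumes f: "f \<in> rules m"
  shows "stab m (act m a f) = stab m f"
proof -
  have "act m b (act m a f) = act m a f \<longleftrightarrow> act m b f = f" for b
    using act_commute[OF f] act_act_self[OF f] act_act_self[OF act_in_rules[OF f]] by metis
  then show ?thesis unfolding stab_def by simp
qed

lemma all_S2_eq: "(\<forall>a. P a) \<longleftrightarrow> P S1 \<and> P Sr \<and> P Sc \<and> P Src"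
  by (metis S2.exhaust)

lemma stab_eq_iff:
  "stab m f = U \<longleftrightarrow> S1 \<in> U \<and> (Sr \<in> U \<longleftrightarrow> act m Sr f = f)
     \<and> (Sc \<in> U \<longleftrightarrow> act m Sc f = f) \<and> (Src \<in> U \<longleftrightarrow> act m Src f = f)"
  unfolding stab_def set_eq_iff all_S2_eq by auto

lemma card_s2_orbit_quotient_compl_rel:
  assumes f: "f \<in> irr m"
  shows "card ((s2rel m `` {f}) // compl_rel m) =
     1 + (if stab m f = {S1} then 1 else 0) + (if stab m f = {S1, Sc} then 1 else 0)"
proof -
  have fr: "f \<in> rules m" using f irr_in_rules by auto
  let ?r = "act m Sr f" and ?c = "act m Sc f" and ?rc = "act m Src f"
  have irr: "?r \<in> irr m" "?c \<in> irr m" "?rc \<in> irr m" using f act_in_irr by auto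
  have c_r: "act m Sc ?r = ?rc" and c_rc: "act m Sc ?rc = ?r" and c_c: "act m Sc ?c = f"
    using fr by (simp_all add: act_act s2_mult_def complements_def)
  have "(s2rel m `` {f}) // compl_rel m = {{f, ?c}, {?r, ?rc}}"
    unfolding s2rel_Image[OF f] quotient_def
    using compl_rel_Image[OF f] compl_rel_Image[OF irr(1)] compl_rel_Image[OF irr(2)]
      compl_rel_Image[OF irr(3)] c_r c_rc c_c
    by auto
  moreover have "{f, ?c} = {?r, ?rc} \<longleftrightarrow> ?r = f \<or> ?rc = f"
    by (metis c_c c_r c_rc doubleton_eq_iff)
  ultimately show ?thesis
    by (auto simp: stab_eq_iff card_insert_if)
qed

lemma s2_orbit_in_tbar_iff:
  assumes f: "f \<in> irr m"
  shows "s2rel m `` {f} \<in> tbar m U \<longleftrightarrow> stab m f = U"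
proof
  assume "s2rel m `` {f} \<in> tbar m U"
  then obtain g where g: "g \<in> s2rel m `` {f}" "stab m g = U" by (auto simp: tbar_def)
  then obtain a where "g = act m a f" by (auto simp: s2rel_def)
  then show "stab m f = U" using g stab_act f irr_in_rules by metis
next
  assume "stab m f = U"
  moreover have "f \<in> s2rel m `` {f}"
    using f equiv_s2rel by (auto simp: equiv_def refl_on_def)
  ultimately show "s2rel m `` {f} \<in> tbar m U"
    using f by (auto simp: tbar_def quotient_def)
qed

lemma card_irr_quotient_compl_rel:
  "card (irr m // compl_rel m) = card (irr m // s2rel m) + card (tbar m {S1}) + card (tbar m {S1, Sc})"
proof -
  let ?Q = "irr m // s2rel m"
  have fin: "finite ?Q"
    using finite_quotient[OF finite_irr] equiv_s2rel by (auto simp: equiv_def refl_on_def)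
  have tbar_sub: "tbar m U \<subseteq> ?Q" for U
    by (auto simp: tbar_def)
  have "card (irr m // compl_rel m) = (\<Sum>D\<in>?Q. card ({f\<in>irr m. f \<in> D} // compl_rel m))"
    by (rule card_quotient_sum_fibres[OF equiv_compl_rel finite_irr equiv_s2rel finite_irr, where h = "\<lambda>f. f"])
      (auto intro: compl_rel_imp_s2rel)
  also have "\<dots> = (\<Sum>D\<in>?Q. 1 + (if D \<in> tbar m {S1} then 1 else 0) + (if D \<in> tbar m {S1, Sc} then 1 else 0))"
  proof (rule sum.cong[OF refl])
    fix D assume "D \<in> ?Q"
    then obtain f where f: "f \<in> irr m" "D = s2rel m `` {f}" by (auto simp: quotient_def)
    then have "{f\<in>irr m. f \<in> D} = D" by (auto simp: s2rel_def)
    then show "card ({f\<in>irr m. f \<in> D} // compl_rel m) =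
        1 + (if D \<in> tbar m {S1} then 1 else 0) + (if D \<in> tbar m {S1, Sc} then 1 else 0)"
      using card_s2_orbit_quotient_compl_rel[OF f(1)] s2_orbit_in_tbar_iff[OF f(1)] f(2) by simp
  qed
  also have "\<dots> = card ?Q + card (?Q \<inter> tbar m {S1}) + card (?Q \<inter> tbar m {S1, Sc})"
  proof -
    have indicator_sum: "(\<Sum>D\<in>?Q. if D \<in> T then 1 else 0) = card (?Q \<inter> T)" for T
      using fin by (simp add: sum.If_cases)
    show ?thesis by (simp only: sum.distrib indicator_sum) simp
  qed
  also have "\<dots> = card ?Q + card (tbar m {S1}) + card (tbar m {S1, Sc})"
    using tbar_sub by (simp add: Int_absorb1)
  finally show ?thesis .
qed

subsection \<open>Reading off the neighbourhood of a global map\<close>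

definition window :: "int set \<Rightarrow> config \<Rightarrow> bool list" where
  "window M y = map y (sorted_list_of_set M)"

definition window_config :: "int set \<Rightarrow> bool list \<Rightarrow> config" where
  "window_config M w j =
     (case map_of (zip (sorted_list_of_set M) w) j of Some b \<Rightarrow> b | None \<Rightarrow> False)"

definition depends :: "(config \<Rightarrow> bool) \<Rightarrow> int \<Rightarrow> bool" where
  "depends F j \<longleftrightarrow> (\<exists>y. F (y(j := \<not> y j)) \<noteq> F y)"

lemma length_window [simp]: "length (window M y) = card M"
  by (simp add: window_def)

lemma window_eq_iff: "finite M \<Longrightarrow> window M y = window M y' \<longleftrightarrow> (\<forall>j\<in>M. y j = y' j)"
  by (simp add: window_def)

lemma window_window_config:
  assumes "finite M" "length w = card M"
  shows "window M (window_config M w) = w"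
proof (rule nth_equalityI)
  show "length (window M (window_config M w)) = length w" using assms by simp
  fix i assume "i < length (window M (window_config M w))"
  then have i: "i < length w" using assms by simp
  have "map_of (zip (sorted_list_of_set M) w) (sorted_list_of_set M ! i) = Some (w ! i)"
    using assms i by (intro map_of_zip_nth) auto
  then show "window M (window_config M w) ! i = w ! i"
    using i assms by (simp add: window_def window_config_def)
qed

lemma window_config_window: "finite M \<Longrightarrow> j \<in> M \<Longrightarrow> window_config M (window M y) j = y j"
  using window_window_config[of M "window M y"] window_eq_iff[of M "window_config M (window M y)" y]
  by simp

lemma window_fun_upd:
  assumes "finite M" "k < card M"
  shows "window M (y(sorted_list_of_set M ! k := b)) = (window M y)[k := b]"
proof (rule nth_equalityI)
  show "length (window M (y(sorted_list_of_set M ! k := b))) = length ((window M y)[k := b])"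
    by simp
  fix i assume "i < length (window M (y(sorted_list_of_set M ! k := b)))"
  then have i: "i < card M" by simp
  have "sorted_list_of_set M ! i = sorted_list_of_set M ! k \<longleftrightarrow> i = k"
    using assms i by (intro nth_eq_iff_index_eq) auto
  then show "window M (y(sorted_list_of_set M ! k := b)) ! i = (window M y)[k := b] ! i"
    using i assms by (auto simp: window_def nth_list_update)
qed

lemma Phi_eq_window: "Phi M g x i = g (window M (\<lambda>j. x (i + j)))"
  by (simp add: Phi_def window_def)

lemma Phi_at_0: "Phi M g y 0 = g (window M y)"
  by (simp add: Phi_eq_window)

lemma not_depends_outside:
  assumes "finite M" "j \<notin> M"
  shows "\<not> depends (\<lambda>y. g (window M y)) j"
proof -
  have "window M (y(j := b)) = window M y" for y b
    using assms window_eq_iff[OF assms(1)] by auto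
  then show ?thesis by (simp add: depends_def)
qed

lemma depends_window_irr:
  assumes M: "finite M" and g: "g \<in> irr (card M)"
  shows "{j. depends (\<lambda>y. g (window M y)) j} = M"
proof
  show "{j. depends (\<lambda>y. g (window M y)) j} \<subseteq> M"
    using not_depends_outside[OF M] by blast
  show "M \<subseteq> {j. depends (\<lambda>y. g (window M y)) j}"
  proof
    fix j assume "j \<in> M"
    then obtain k where k: "k < card M" "j = sorted_list_of_set M ! k"
      using M by (metis in_set_conv_nth length_sorted_list_of_set set_sorted_list_of_set)
    then obtain w where w: "length w = card M" "g (w[k := \<not> w ! k]) \<noteq> g w"
      using g by (auto simp: irr_def)
    let ?y = "window_config M w"
    have y: "window M ?y = w" using window_window_config M w by simp
    have "?y j = window M ?y ! k" using k M by (simp add: window_def)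
    then have "?y j = w ! k" using y by simp
    then have "window M (?y(j := \<not> ?y j)) = w[k := \<not> w ! k]"
      using window_fun_upd[OF M k(1), of ?y] k y by simp
    then show "j \<in> {j. depends (\<lambda>y. g (window M y)) j}"
      using w y by (auto simp: depends_def intro!: exI[of _ ?y])
  qed
qed

lemma rules_eqI:
  "f \<in> rules m \<Longrightarrow> g \<in> rules m \<Longrightarrow> (\<And>w. length w = m \<Longrightarrow> f w = g w) \<Longrightarrow> f = g"
  by (auto simp: rules_def fun_eq_iff)

lemma Phi_irr_inject:
  assumes M: "finite M" and M': "finite M'"
    and g: "g \<in> irr (card M)" and g': "g' \<in> irr (card M')" and eq: "Phi M g = Phi M' g'"
  shows "M = M' \<and> g = g'"
proof -
  have at_0: "(\<lambda>y. g (window M y)) = (\<lambda>y. g' (window M' y))"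
    using eq by (metis Phi_at_0)
  then have "M = M'"
    using depends_window_irr[OF M g] depends_window_irr[OF M' g'] by simp
  moreover have "g = g'"
  proof (rule rules_eqI)
    show "g \<in> rules (card M)" "g' \<in> rules (card M)"
      using g g' \<open>M = M'\<close> by (auto simp: irr_def)
    fix w :: "bool list" assume "length w = card M"
    then have "window M (window_config M w) = w" by (rule window_window_config[OF M])
    moreover have "g (window M (window_config M w)) = g' (window M' (window_config M w))"
      using at_0 by (rule fun_cong)
    ultimately show "g w = g' w" using \<open>M = M'\<close> by simp
  qed
  ultimately show ?thesis by simp
qed

lemma Phi_in_G2:
  assumes N: "finite N" and MN: "M \<subseteq> N"
  shows "Phi M g \<in> G2 N"
proof -
  have M: "finite M" using N MN finite_subset by auto
  define f where "f w = (if length w = card N then g (window M (window_config N w)) else False)" for w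
  have "f \<in> rules (card N)" by (simp add: rules_def f_def)
  moreover have "Phi M g = Phi N f"
  proof (intro ext)
    fix x :: config and i :: int
    have "window M (window_config N (window N (\<lambda>j. x (i + j)))) = window M (\<lambda>j. x (i + j))"
      using window_config_window[OF N] MN window_eq_iff[OF M] by auto
    then show "Phi M g x i = Phi N f x i" by (simp add: Phi_eq_window f_def)
  qed
  ultimately show ?thesis unfolding G2_def by blast
qed

lemma eq_if_agree_off_independent:
  assumes "finite D" and "\<And>d. d \<in> D \<Longrightarrow> \<not> depends F d" and "\<forall>j. j \<notin> D \<longrightarrow> y j = y' j"
  shows "F y = F y'"
  using assms
proof (induction D arbitrary: y rule: finite_induct)
  case empty
  then have "y = y'" by (simp add: fun_eq_iff)
  then show ?case by simp
next
  case (insert d D)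
  have "\<And>d'. d' \<in> D \<Longrightarrow> \<not> depends F d'" "\<forall>j. j \<notin> D \<longrightarrow> (y(d := y' d)) j = y' j"
    using insert.prems by simp_all
  then have "F (y(d := y' d)) = F y'" by (rule insert.IH)
  moreover have "F y = F (y(d := y' d))"
  proof (cases "y d = y' d")
    case True
    then have "y(d := y' d) = y" by (simp add: fun_upd_idem)
    then show ?thesis by simp
  next
    case False
    then have "y(d := y' d) = y(d := \<not> y d)" by (simp add: fun_eq_iff)
    moreover have "\<not> depends F d" using insert.prems(1) by simp
    ultimately show ?thesis unfolding depends_def by metis
  qed
  ultimately show ?case by simp
qed

lemma eq_if_agree_on_dependent:
  assumes N: "finite N" and F_local: "\<And>y y'. \<forall>j\<in>N. y j = y' j \<Longrightarrow> F y = F y'"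
    and agree: "\<forall>j. depends F j \<longrightarrow> y j = y' j"
  shows "F y = F y'"
proof -
  let ?restrict = "\<lambda>y j. if j \<in> N then y j else False"
  have "F y = F (?restrict y)" "F y' = F (?restrict y')"
    using F_local[of y "?restrict y"] F_local[of y' "?restrict y'"] by simp_all
  moreover have "F (?restrict y) = F (?restrict y')"
    using N agree by (intro eq_if_agree_off_independent[where D = "{j\<in>N. \<not> depends F j}"]) simp_all
  ultimately show ?thesis by simp
qed

lemma irr_if_depends:
  assumes M: "finite M" and g: "g \<in> rules (card M)"
    and dep: "\<And>j. j \<in> M \<Longrightarrow> depends (\<lambda>y. g (window M y)) j"
  shows "g \<in> irr (card M)"
  unfolding irr_def
proof (intro CollectI conjI g allI impI)
  fix k assume k: "k < card M"
  let ?j = "sorted_list_of_set M ! k"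
  have "?j \<in> M" using k M by (metis nth_mem length_sorted_list_of_set set_sorted_list_of_set)
  then obtain y where y: "g (window M (y(?j := \<not> y ?j))) \<noteq> g (window M y)"
    using dep by (auto simp: depends_def)
  have "window M y ! k = y ?j" using k M by (simp add: window_def)
  then have "(window M y)[k := \<not> window M y ! k] = window M (y(?j := \<not> y ?j))"
    using window_fun_upd[OF M k] by simp
  then show "\<exists>w. length w = card M \<and> g (w[k := \<not> w ! k]) \<noteq> g w"
    using y by (intro exI[of _ "window M y"]) simp
qed

lemma G2_obtain_irr:
  assumes N: "finite N" and "\<Phi> \<in> G2 N"
  obtains M g where "M \<subseteq> N" "g \<in> irr (card M)" "\<Phi> = Phi M g"
proof -
  obtain f where "\<Phi> = Phi N f" using \<open>\<Phi> \<in> G2 N\<close> by (auto simp: G2_def)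
  define F where "F y = f (window N y)" for y
  define M where "M = {j. depends F j}"
  have MN: "M \<subseteq> N"
    using not_depends_outside[OF N, of _ f] by (auto simp: M_def F_def[abs_def])
  then have M: "finite M" using N finite_subset by auto
  define g where "g w = (if length w = card M then F (window_config M w) else False)" for w
  have g_window: "g (window M y) = F y" for y
  proof -
    have F_local: "F y = F y'" if "\<forall>j\<in>N. y j = y' j" for y y'
      using that window_eq_iff[OF N, of y y'] by (simp add: F_def)
    have "\<forall>j. depends F j \<longrightarrow> window_config M (window M y) j = y j"
      using window_config_window[OF M] by (simp add: M_def)
    then have "F (window_config M (window M y)) = F y"
      by (rule eq_if_agree_on_dependent[OF N, rotated]) (fact F_local)
    then show ?thesis by (simp add: g_def)
  qed
  have "\<Phi> = Phi M g"
    using \<open>\<Phi> = Phi N f\<close> by (simp add: fun_eq_iff Phi_eq_window g_window F_def)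
  moreover have "g \<in> irr (card M)"
  proof (rule irr_if_depends[OF M])
    show "g \<in> rules (card M)" by (simp add: rules_def g_def)
    have "(\<lambda>y. g (window M y)) = F" by (simp add: fun_eq_iff g_window)
    then show "depends (\<lambda>y. g (window M y)) j" if "j \<in> M" for j
      using that by (simp add: M_def)
  qed
  ultimately show ?thesis using MN that by blast
qed

definition isom_image :: "int \<Rightarrow> S2 \<Rightarrow> int set \<Rightarrow> int set" where
  "isom_image j a M = (if reverses a then (\<lambda>i. j - i) ` M else (\<lambda>i. j + i) ` M)"

lemma finite_isom_image [simp]: "finite (isom_image j a M) \<longleftrightarrow> finite M"
  by (auto simp: isom_image_def finite_image_iff inj_on_def)

lemma card_isom_image [simp]: "card (isom_image j a M) = card M"
  by (auto simp: isom_image_def card_image inj_on_def)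

lemma isom_image_isom_image:
  "isom_image j a (isom_image j' b M) = isom_image (if reverses a then j - j' else j + j') (s2_mult a b) M"
  by (auto simp: isom_image_def reverses_s2_mult image_image algebra_simps)

lemma translate_isom_image: "(\<lambda>i. k + i) ` isom_image j a M = isom_image (k + j) a M"
  by (auto simp: isom_image_def image_image algebra_simps)

lemma isom_image_s2_mult_Sc: "isom_image j (s2_mult Sc a) M = isom_image j a M"
  by (simp add: isom_image_def reverses_s2_mult)

lemma uminus_isom_image: "uminus ` isom_image j a M = isom_image (- j) (s2_mult Sr a) M"
  by (force simp: isom_image_def reverses_s2_mult image_image)

lemma isom_image_0_S1 [simp]: "isom_image 0 S1 M = M"
  by (simp add: isom_image_def)

lemma isom_image_inverse: "isom_image (if reverses a then j else - j) a (isom_image j a M) = M"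
  by (simp add: isom_image_isom_image)

definition shift_by :: "int \<Rightarrow> config \<Rightarrow> config" where
  "shift_by k x = (\<lambda>i. x (i + k))"

lemma shiftc_eq_shift_by: "shiftc = shift_by 1"
  by (simp add: fun_eq_iff shiftc_def shift_by_def)

lemma unshiftc_eq_shift_by: "unshiftc = shift_by (- 1)"
  by (simp add: fun_eq_iff unshiftc_def shift_by_def)

lemma sorted_list_of_set_translate:
  fixes M :: "int set"
  assumes "finite M"
  shows "sorted_list_of_set ((\<lambda>i. k + i) ` M) = map (\<lambda>i. k + i) (sorted_list_of_set M)"
proof (rule strict_sorted_equal)
  show "sorted_wrt (<) (map (\<lambda>i. k + i) (sorted_list_of_set M))"
    unfolding sorted_wrt_map by (rule sorted_wrt_mono_rel[OF _ strict_sorted_list_of_set]) simp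
qed (use assms in simp_all)

lemma sorted_list_of_set_uminus:
  fixes M :: "int set"
  assumes "finite M"
  shows "sorted_list_of_set (uminus ` M) = rev (map uminus (sorted_list_of_set M))"
proof (rule strict_sorted_equal)
  show "sorted_wrt (<) (rev (map uminus (sorted_list_of_set M)))"
    unfolding sorted_wrt_rev sorted_wrt_map
    by (rule sorted_wrt_mono_rel[OF _ strict_sorted_list_of_set]) simp
qed (use assms in simp_all)

lemma Phi_shift:
  "finite M \<Longrightarrow> shift_by k \<circ> Phi M g = Phi ((\<lambda>i. k + i) ` M) g"
  by (simp add: fun_eq_iff shift_by_def Phi_def sorted_list_of_set_translate add.assoc comp_def)

lemma Phi_flip: "flipc \<circ> Phi M g \<circ> flipc = Phi M (act (card M) Sc g)"
  by (simp add: fun_eq_iff flipc_def Phi_def act_def comp_def)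

lemma Phi_rev:
  assumes "finite M"
  shows "revc \<circ> Phi M g \<circ> revc = Phi (uminus ` M) (act (card M) Sr g)"
proof -
  have "card (uminus ` M) = card M" by (simp add: card_image)
  then show ?thesis
    using assms by (simp add: fun_eq_iff revc_def Phi_def act_def sorted_list_of_set_uminus rev_map comp_def)
qed

lemma T2_Phi_cases:
  assumes "\<tau> \<in> T2" and M: "finite M" and g: "g \<in> rules (card M)"
  shows "\<exists>j a. \<tau> (Phi M g) = Phi (isom_image j a M) (act (card M) a g)"
  using assms(1)
proof induction
  case T2_id
  show ?case by (intro exI[of _ 0] exI[of _ S1]) simp
next
  case (T2_shift \<tau>)
  then obtain j a where "\<tau> (Phi M g) = Phi (isom_image j a M) (act (card M) a g)" by blast
  then have "shiftc \<circ> \<tau> (Phi M g) = Phi (isom_image (1 + j) a M) (act (card M) a g)"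
    using M by (simp add: shiftc_eq_shift_by Phi_shift translate_isom_image)
  then show ?case by blast
next
  case (T2_unshift \<tau>)
  then obtain j a where "\<tau> (Phi M g) = Phi (isom_image j a M) (act (card M) a g)" by blast
  then have "unshiftc \<circ> \<tau> (Phi M g) = Phi (isom_image (- 1 + j) a M) (act (card M) a g)"
    using M by (simp only: unshiftc_eq_shift_by Phi_shift finite_isom_image translate_isom_image)
  then show ?case by blast
next
  case (T2_flip \<tau>)
  then obtain j a where "\<tau> (Phi M g) = Phi (isom_image j a M) (act (card M) a g)" by blast
  then have "flipc \<circ> \<tau> (Phi M g) \<circ> flipc = Phi (isom_image j (s2_mult Sc a) M) (act (card M) (s2_mult Sc a) g)"
    using g by (simp add: Phi_flip act_act isom_image_s2_mult_Sc)
  then show ?case by blast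
next
  case (T2_rev \<tau>)
  then obtain j a where "\<tau> (Phi M g) = Phi (isom_image j a M) (act (card M) a g)" by blast
  then have "revc \<circ> \<tau> (Phi M g) \<circ> revc = Phi (isom_image (- j) (s2_mult Sr a) M) (act (card M) (s2_mult Sr a) g)"
    using M g by (simp add: Phi_rev act_act uminus_isom_image)
  then show ?case by blast
qed

lemma T2_shift_by:
  assumes "\<tau> \<in> T2"
  shows "(\<lambda>\<Phi>. shift_by k \<circ> \<tau> \<Phi>) \<in> T2"
proof (induction k rule: int_induct[where k = 0])
  case base
  have shift_0: "(\<lambda>\<Phi>. shift_by 0 \<circ> \<tau> \<Phi>) = \<tau>" by (simp add: fun_eq_iff shift_by_def)
  show ?case unfolding shift_0 by (rule assms)
next
  case (step1 i)
  have shift_succ: "(\<lambda>\<Phi>. shiftc \<circ> (shift_by i \<circ> \<tau> \<Phi>)) = (\<lambda>\<Phi>. shift_by (i + 1) \<circ> \<tau> \<Phi>)"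
    by (simp add: fun_eq_iff shiftc_def shift_by_def algebra_simps)
  show ?case using T2_shift[OF step1.IH] unfolding shift_succ .
next
  case (step2 i)
  have shift_pred: "(\<lambda>\<Phi>. unshiftc \<circ> (shift_by i \<circ> \<tau> \<Phi>)) = (\<lambda>\<Phi>. shift_by (i - 1) \<circ> \<tau> \<Phi>)"
    by (simp add: fun_eq_iff unshiftc_def shift_by_def algebra_simps)
  show ?case using T2_unshift[OF step2.IH] unfolding shift_pred .
qed

lemma T2_realizes_S2:
  assumes M: "finite M"
  obtains \<tau> where "\<tau> \<in> T2" "\<tau> (Phi M g) = Phi (isom_image 0 a M) (act (card M) a g)"
proof (cases a)
  case S1
  then show ?thesis using that[OF T2_id] by simp
next
  case Sc
  then show ?thesis using that[OF T2_flip[OF T2_id]] by (simp add: Phi_flip isom_image_def)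
next
  case Sr
  then show ?thesis using that[OF T2_rev[OF T2_id]] M by (simp add: Phi_rev isom_image_def)
next
  case Src
  have "flipc \<circ> (revc \<circ> Phi M g \<circ> revc) \<circ> flipc = Phi (uminus ` M) (act (card M) Src g)"
    using M by (simp add: Phi_rev Phi_flip card_image act_Src)
  then show ?thesis using that[OF T2_flip[OF T2_rev[OF T2_id]]] Src by (simp add: isom_image_def)
qed

lemma T2_realizes:
  assumes M: "finite M"
  obtains \<tau> where "\<tau> \<in> T2" "\<tau> (Phi M g) = Phi (isom_image j a M) (act (card M) a g)"
proof -
  obtain \<tau> where "\<tau> \<in> T2" and \<tau>: "\<tau> (Phi M g) = Phi (isom_image 0 a M) (act (card M) a g)"
    using T2_realizes_S2[OF M] .
  from \<open>\<tau> \<in> T2\<close> have "(\<lambda>\<Phi>. shift_by j \<circ> \<tau> \<Phi>) \<in> T2" by (rule T2_shift_by)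
  moreover have "shift_by j \<circ> \<tau> (Phi M g) = Phi (isom_image j a M) (act (card M) a g)"
    using M by (simp add: \<tau> Phi_shift translate_isom_image)
  ultimately show ?thesis using that by blast
qed

subsection \<open>Pairs of a neighbourhood and an irreducible rule\<close>

definition irr_pairs :: "int set \<Rightarrow> (int set \<times> rule) set" where
  "irr_pairs N = (SIGMA M:Pow N. irr (card M))"

definition pair_rel :: "int set \<Rightarrow> ((int set \<times> rule) \<times> (int set \<times> rule)) set" where
  "pair_rel N = {((M, g), (M', g')). (M, g) \<in> irr_pairs N \<and> (M', g') \<in> irr_pairs N \<and>
      (\<exists>j a. M' = isom_image j a M \<and> g' = act (card M) a g)}"

lemma finite_irr_pairs: "finite N \<Longrightarrow> finite (irr_pairs N)"
  unfolding irr_pairs_def by (intro finite_SigmaI) (auto simp: finite_irr)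

lemma pair_rel_sym:
  assumes "((M, g), (M', g')) \<in> pair_rel N"
  shows "((M', g'), (M, g)) \<in> pair_rel N"
proof -
  obtain j a where M': "M' = isom_image j a M" and g': "g' = act (card M) a g"
    and g: "g \<in> irr (card M)"
    using assms by (auto simp: pair_rel_def irr_pairs_def)
  have "M = isom_image (if reverses a then j else - j) a M'"
    using M' isom_image_inverse by simp
  moreover have "g = act (card M') a g'"
    using M' g' g by (simp add: act_act_self irr_in_rules)
  ultimately show ?thesis
    using assms by (auto simp: pair_rel_def)
qed

lemma pair_rel_trans:
  assumes "((M, g), (M', g')) \<in> pair_rel N" "((M', g'), (M'', g'')) \<in> pair_rel N"
  shows "((M, g), (M'', g'')) \<in> pair_rel N"
proof -
  obtain j a where M': "M' = isom_image j a M" and g': "g' = act (card M) a g"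
    and g: "g \<in> irr (card M)"
    using assms(1) by (auto simp: pair_rel_def irr_pairs_def)
  obtain j' b where M'': "M'' = isom_image j' b M'" and g'': "g'' = act (card M') b g'"
    using assms(2) by (auto simp: pair_rel_def)
  have "M'' = isom_image (if reverses b then j' - j else j' + j) (s2_mult b a) M"
    using M' M'' by (simp add: isom_image_isom_image)
  moreover have "g'' = act (card M) (s2_mult b a) g"
    using M' g' g'' g by (simp add: act_act irr_in_rules)
  ultimately show ?thesis
    using assms by (auto simp: pair_rel_def)
qed

lemma equiv_pair_rel: "equiv (irr_pairs N) (pair_rel N)"
proof (rule equivI)
  show "pair_rel N \<subseteq> irr_pairs N \<times> irr_pairs N" by (auto simp: pair_rel_def)
  show "refl_on (irr_pairs N) (pair_rel N)"
    by (auto simp: refl_on_def pair_rel_def intro!: exI[of _ 0] exI[of _ S1])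
  show "sym (pair_rel N)"
    unfolding sym_def by (auto intro: pair_rel_sym)
  show "trans (pair_rel N)"
    unfolding trans_def by (auto intro: pair_rel_trans)
qed

lemma congS_iff_isom_image:
  "(M, M') \<in> congS N \<longleftrightarrow> M \<subseteq> N \<and> M' \<subseteq> N \<and> (\<exists>j a. M' = isom_image j a M)"
proof -
  have "(\<exists>j a. M' = isom_image j a M) \<longleftrightarrow> (\<exists>j. M' = (\<lambda>i. j + i) ` M \<or> M' = (\<lambda>i. j - i) ` M)"
    by (metis isom_image_def reverses_simps(1,2))
  then show ?thesis by (auto simp: congS_def)
qed

lemma equiv_congS: "equiv (Pow N) (congS N)"
proof (rule equivI)
  show "congS N \<subseteq> Pow N \<times> Pow N" by (auto simp: congS_def)
  show "refl_on (Pow N) (congS N)" unfolding refl_on_def congS_iff_isom_image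
    by (auto intro!: exI[of _ 0] exI[of _ S1])
  show "sym (congS N)" unfolding sym_def congS_iff_isom_image by (metis isom_image_inverse)
  show "trans (congS N)" unfolding trans_def congS_iff_isom_image by (metis isom_image_isom_image)
qed

lemma bij_betw_Phi_irr_pairs:
  assumes N: "finite N"
  shows "bij_betw (\<lambda>(M, g). Phi M g) (irr_pairs N) (G2 N)"
proof (rule bij_betwI')
  fix p p' assume "p \<in> irr_pairs N" "p' \<in> irr_pairs N"
  moreover obtain M g M' g' where p: "p = (M, g)" and p': "p' = (M', g')"
    by (cases p, cases p')
  ultimately have "finite M" "finite M'" "g \<in> irr (card M)" "g' \<in> irr (card M')"
    using N by (auto simp: irr_pairs_def dest: finite_subset)
  then show "((\<lambda>(M, g). Phi M g) p = (\<lambda>(M, g). Phi M g) p') \<longleftrightarrow> p = p'"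
    using Phi_irr_inject p p' by auto
next
  fix p assume "p \<in> irr_pairs N"
  then show "(\<lambda>(M, g). Phi M g) p \<in> G2 N"
    using N Phi_in_G2 by (auto simp: irr_pairs_def)
next
  fix \<Phi> assume "\<Phi> \<in> G2 N"
  then obtain M g where "M \<subseteq> N" "g \<in> irr (card M)" "\<Phi> = Phi M g"
    using G2_obtain_irr[OF N] by blast
  then show "\<exists>p\<in>irr_pairs N. \<Phi> = (\<lambda>(M, g). Phi M g) p"
    by (intro bexI[of _ "(M, g)"]) (auto simp: irr_pairs_def)
qed

lemma congG_Phi_iff:
  assumes N: "finite N" and p: "(M, g) \<in> irr_pairs N" and p': "(M', g') \<in> irr_pairs N"
  shows "(Phi M g, Phi M' g') \<in> congG N \<longleftrightarrow> ((M, g), (M', g')) \<in> pair_rel N"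
proof -
  have M: "finite M" and M': "finite M'" and g: "g \<in> irr (card M)" and g': "g' \<in> irr (card M')"
    using p p' N by (auto simp: irr_pairs_def dest: finite_subset)
  have "(\<exists>\<tau>\<in>T2. Phi M' g' = \<tau> (Phi M g)) \<longleftrightarrow> (\<exists>j a. M' = isom_image j a M \<and> g' = act (card M) a g)"
  proof
    assume "\<exists>\<tau>\<in>T2. Phi M' g' = \<tau> (Phi M g)"
    then obtain j a where "Phi M' g' = Phi (isom_image j a M) (act (card M) a g)"
      using T2_Phi_cases[OF _ M irr_in_rules[OF g]] by metis
    then show "\<exists>j a. M' = isom_image j a M \<and> g' = act (card M) a g"
      using Phi_irr_inject[OF M'] M g' act_in_irr[OF g] by (metis card_isom_image finite_isom_image)
  next
    assume "\<exists>j a. M' = isom_image j a M \<and> g' = act (card M) a g"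
    then show "\<exists>\<tau>\<in>T2. Phi M' g' = \<tau> (Phi M g)"
      using T2_realizes[OF M] by metis
  qed
  moreover have "Phi M g \<in> G2 N" "Phi M' g' \<in> G2 N"
    using N p p' Phi_in_G2 by (auto simp: irr_pairs_def)
  ultimately show ?thesis
    using p p' by (simp add: congG_def pair_rel_def)
qed

lemma card_G2_quotient:
  assumes N: "finite N"
  shows "card (G2 N // congG N) = card (irr_pairs N // pair_rel N)"
proof (rule card_quotient_bij_betw[OF equiv_pair_rel bij_betw_Phi_irr_pairs[OF N], symmetric])
  show "congG N \<subseteq> G2 N \<times> G2 N" by (auto simp: congG_def)
  show "(p, p') \<in> pair_rel N \<longleftrightarrow> ((\<lambda>(M, g). Phi M g) p, (\<lambda>(M, g). Phi M g) p') \<in> congG N"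
    if "p \<in> irr_pairs N" "p' \<in> irr_pairs N" for p p'
    using that congG_Phi_iff[OF N] by (cases p, cases p') simp
qed

lemma card_irr_pairs_quotient:
  assumes N: "finite N"
  shows "card (irr_pairs N // pair_rel N) =
    (\<Sum>K\<in>Pow N // congS N. card ({p \<in> irr_pairs N. fst p \<in> K} // pair_rel N))"
proof (rule card_quotient_sum_fibres[OF equiv_pair_rel finite_irr_pairs[OF N] equiv_congS])
  show "finite (Pow N)" using N by simp
  show "fst ` irr_pairs N \<subseteq> Pow N" by (auto simp: irr_pairs_def)
  show "(fst p, fst p') \<in> congS N" if "(p, p') \<in> pair_rel N" for p p'
    using that by (fastforce simp: pair_rel_def irr_pairs_def congS_iff_isom_image)
qed

lemma not_reverses_iff: "\<not> reverses a \<longleftrightarrow> a = S1 \<or> a = Sc"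
  by (cases a) simp_all

lemma self_isom_image_iff: "(\<exists>j. isom_image j a M = M) \<longleftrightarrow> (reverses a \<longrightarrow> M \<in> Sym)"
proof (cases "reverses a")
  case True
  then show ?thesis by (simp add: isom_image_def Sym_def) (metis)
next
  case False
  then show ?thesis by (auto simp: isom_image_def intro: exI[of _ 0])
qed

lemma pair_rel_same_iff:
  assumes "M \<subseteq> N" "g \<in> irr (card M)" "g' \<in> irr (card M)"
  shows "((M, g), (M, g')) \<in> pair_rel N \<longleftrightarrow>
    (g, g') \<in> (if M \<in> Sym then s2rel (card M) else compl_rel (card M))"
proof -
  have "((M, g), (M, g')) \<in> pair_rel N \<longleftrightarrow> (\<exists>a. (\<exists>j. isom_image j a M = M) \<and> g' = act (card M) a g)"
    using assms by (auto simp: pair_rel_def irr_pairs_def)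
  also have "\<dots> \<longleftrightarrow> (\<exists>a. (reverses a \<longrightarrow> M \<in> Sym) \<and> g' = act (card M) a g)"
    by (simp only: self_isom_image_iff)
  also have "\<dots> \<longleftrightarrow> (g, g') \<in> (if M \<in> Sym then s2rel (card M) else compl_rel (card M))"
    using assms not_reverses_iff by (auto simp: s2rel_def compl_rel_def)
  finally show ?thesis .
qed

lemma pair_rel_over_congS:
  assumes "(M, M') \<in> congS N" "g' \<in> irr (card M')"
  shows "\<exists>g\<in>irr (card M). ((M, g), (M', g')) \<in> pair_rel N"
proof -
  obtain j a where M': "M' = isom_image j a M" and "M \<subseteq> N" "M' \<subseteq> N"
    using assms(1) by (auto simp: congS_iff_isom_image)
  let ?g = "act (card M) a g'"
  have "?g \<in> irr (card M)" "g' = act (card M) a ?g"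
    using assms(2) M' by (simp_all add: act_in_irr act_act_self irr_in_rules)
  then show ?thesis
    using assms(2) M' \<open>M \<subseteq> N\<close> \<open>M' \<subseteq> N\<close> by (auto simp: pair_rel_def irr_pairs_def)
qed

lemma class_eq_Image_rep:
  assumes K: "K \<in> Pow N // congS N"
  shows "rep K \<in> K" and "K = congS N `` {rep K}"
proof -
  show "rep K \<in> K"
    unfolding rep_def by (rule someI_ex) (metis K equiv_congS in_quotient_imp_non_empty ex_in_conv)
  moreover obtain M where "K = congS N `` {M}" using K by (auto simp: quotient_def)
  ultimately show "K = congS N `` {rep K}"
    using equiv_class_eq[OF equiv_congS] by blast
qed

lemma card_fibre_quotient:
  assumes N: "finite N" and K: "K \<in> Pow N // congS N"
  defines "M \<equiv> rep K"
  shows "card ({p \<in> irr_pairs N. fst p \<in> K} // pair_rel N) =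
    card (irr (card M) // (if M \<in> Sym then s2rel (card M) else compl_rel (card M)))"
proof -
  let ?H = "if M \<in> Sym then s2rel (card M) else compl_rel (card M)"
  have K_eq: "K = congS N `` {M}"
    unfolding M_def by (rule class_eq_Image_rep(2)[OF K])
  have in_K: "M' \<in> K \<longleftrightarrow> (M, M') \<in> congS N" for M'
    by (subst K_eq) simp
  have MN: "M \<subseteq> N" and "M \<in> K"
    using class_eq_Image_rep(1)[OF K] in_K by (auto simp: M_def congS_def)
  have "card (irr (card M) // ?H) = card ({p \<in> irr_pairs N. fst p \<in> K} // pair_rel N)"
  proof (rule card_quotient_transfer[OF _ equiv_pair_rel, where h = "\<lambda>g. (M, g)"])
    show "equiv (irr (card M)) ?H" by (simp add: equiv_s2rel equiv_compl_rel)
    show "{p \<in> irr_pairs N. fst p \<in> K} \<subseteq> irr_pairs N" by blast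
    show "(\<lambda>g. (M, g)) ` irr (card M) \<subseteq> {p \<in> irr_pairs N. fst p \<in> K}"
      using \<open>M \<in> K\<close> MN by (auto simp: irr_pairs_def)
    show "\<exists>g\<in>irr (card M). ((M, g), p) \<in> pair_rel N"
      if "p \<in> {p \<in> irr_pairs N. fst p \<in> K}" for p
      using that pair_rel_over_congS in_K by (cases p) (auto simp: irr_pairs_def)
    show "(g, g') \<in> ?H \<longleftrightarrow> ((M, g), (M, g')) \<in> pair_rel N"
      if "g \<in> irr (card M)" "g' \<in> irr (card M)" for g g'
      using pair_rel_same_iff[OF MN that] by simp
  qed
  then show ?thesis by simp
qed

theorem proposition9:
  fixes n :: nat
  defines "N \<equiv> {1..int n}"
  shows "card (G2 N // congG N) =
    (\<Sum>C\<in>Pow N // congS N. card (irr (card (rep C)) // s2rel (card (rep C))))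
    + (\<Sum>C\<in>{C \<in> Pow N // congS N. rep C \<notin> Sym}.
         card (tbar (card (rep C)) {S1}) + card (tbar (card (rep C)) {S1, Sc}))"
proof -
  have N: "finite N" unfolding N_def by simp
  have "finite (Pow N // congS N)" by (rule finite_quotient) (auto simp: N congS_def)
  have "card (G2 N // congG N) =
      (\<Sum>K\<in>Pow N // congS N. card ({p \<in> irr_pairs N. fst p \<in> K} // pair_rel N))"
    by (simp add: card_G2_quotient[OF N] card_irr_pairs_quotient[OF N])
  also have "\<dots> = (\<Sum>K\<in>Pow N // congS N. card (irr (card (rep K)) // s2rel (card (rep K)))
      + (if rep K \<notin> Sym then card (tbar (card (rep K)) {S1}) + card (tbar (card (rep K)) {S1, Sc}) else 0))"
    by (rule sum.cong[OF refl]) (simp add: card_fibre_quotient[OF N] card_irr_quotient_compl_rel)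
  also have "\<dots> = (\<Sum>C\<in>Pow N // congS N. card (irr (card (rep C)) // s2rel (card (rep C))))
    + (\<Sum>C\<in>{C \<in> Pow N // congS N. rep C \<notin> Sym}.
         card (tbar (card (rep C)) {S1}) + card (tbar (card (rep C)) {S1, Sc}))"
    using \<open>finite (Pow N // congS N)\<close> by (subst sum.inter_filter) (simp_all add: sum.distrib)
  finally show ?thesis .
qed

end
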